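(* Every $\mathbb{G}$-predictable process $Y$ satisfies the global optional splitting formula at $\tau$ with respect to $\mathbb{F}$, i.e. there exist $Y'\in\mathcal{O}(\mathbb{F})$ and a $\mathcal{B}[0,\infty]\otimes\mathcal{O}(\mathbb{F})$-measurable function $Y''$ on $[0,\infty]\times(\mathbb{R}_+\times\Omega)$ with $Y=Y'\mathbf{1}_{[0,\tau)}+Y''(\tau)\mathbf{1}_{[\tau,\infty)}$.
   Context: Let $(\Omega,\mathcal{A},\mathbb{Q})$ be a probability space with a right-continuous filtration $\mathbb{F}=(\mathcal{F}_t)_{t\ge0}$ such that $\mathcal{F}_0$ contains $\mathcal{N}^{\mathcal{F}_\infty}$, where for a $\sigma$-algebra $\mathcal{T}\subset\mathcal{A}$, $\mathcal{N}^{\mathcal{T}}$ denotes the $\sigma$-algebra generated by all subsets of $\mathcal{T}$-measurable $\mathbb{Q}$-null sets. Let $\tau$ be a random variable with values in $[0,\infty]$, let $\mathcal{N}=\mathcal{N}^{\sigma(\tau)\vee\mathcal{F}_\infty}$, and let $\mathbb{G}=(\mathcal{G}_t)_{t\ge0}$ with $\mathcal{G}_t=\mathcal{N}\vee\bigcap_{s>t}(\mathcal{F}_s\vee\sigma(\tau\wedge s))$. Identities between processes are understood up to indistinguishability outside an $\mathcal{N}$-measurable $\mathbb{Q}$-null set. $Y''(\tau)$ denotes the process $(t,\omega)\mapsto Y''(\tau(\omega),t,\omega)$. *)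

theory Defs
  imports "HOL-Probability.Probability"
begin

text \<open>Time is [0,\<infinity>) as nonnegative reals; processes are functions real => 'a => real,
  considered on the domain {0..} \<times> \<Omega>.\<close>

definition proc_dom :: "'a measure \<Rightarrow> (real \<times> 'a) set" where
  "proc_dom M = {0..} \<times> space M"

definition filtration :: "'a measure \<Rightarrow> (real \<Rightarrow> 'a set set) \<Rightarrow> bool" where
  "filtration M F \<longleftrightarrow>
     (\<forall>t\<ge>0. sigma_algebra (space M) (F t) \<and> F t \<subseteq> sets M) \<and>
     (\<forall>s t. 0 \<le> s \<longrightarrow> s \<le> t \<longrightarrow> F s \<subseteq> F t)"

definition right_continuous_filtration :: "(real \<Rightarrow> 'a set set) \<Rightarrow> bool" where
  "right_continuous_filtration F \<longleftrightarrow> (\<forall>t\<ge>0. F t = (\<Inter>s\<in>{t<..}. F s))"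

definition filt_infty :: "'a measure \<Rightarrow> (real \<Rightarrow> 'a set set) \<Rightarrow> 'a set set" where
  "filt_infty M F = sigma_sets (space M) (\<Union>t\<in>{0..}. F t)"

definition null_sigma :: "'a measure \<Rightarrow> 'a set set \<Rightarrow> 'a set set" where
  "null_sigma M T = sigma_sets (space M) {A. \<exists>B\<in>T. B \<in> sets M \<and> measure M B = 0 \<and> A \<subseteq> B}"

definition sjoin :: "'a measure \<Rightarrow> 'a set set \<Rightarrow> 'a set set \<Rightarrow> 'a set set" where
  "sjoin M A B = sigma_sets (space M) (A \<union> B)"

definition sigma_rv :: "'a measure \<Rightarrow> ('a \<Rightarrow> ereal) \<Rightarrow> 'a set set" where
  "sigma_rv M X = {X -` B \<inter> space M | B. B \<in> sets (borel :: ereal measure)}"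

definition N_tau :: "'a measure \<Rightarrow> (real \<Rightarrow> 'a set set) \<Rightarrow> ('a \<Rightarrow> ereal) \<Rightarrow> 'a set set" where
  "N_tau M F \<tau> = null_sigma M (sjoin M (sigma_rv M \<tau>) (filt_infty M F))"

definition G_filt :: "'a measure \<Rightarrow> (real \<Rightarrow> 'a set set) \<Rightarrow> ('a \<Rightarrow> ereal) \<Rightarrow> real \<Rightarrow> 'a set set" where
  "G_filt M F \<tau> t = sjoin M (N_tau M F \<tau>)
      (\<Inter>s\<in>{t<..}. sjoin M (F s) (sigma_rv M (\<lambda>\<omega>. min (\<tau> \<omega>) (ereal s))))"

definition adapted :: "'a measure \<Rightarrow> (real \<Rightarrow> 'a set set) \<Rightarrow> (real \<Rightarrow> 'a \<Rightarrow> real) \<Rightarrow> bool" where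
  "adapted M F X \<longleftrightarrow> (\<forall>t\<ge>0. \<forall>B\<in>sets (borel :: real measure). {\<omega>\<in>space M. X t \<omega> \<in> B} \<in> F t)"

definition cadlag_paths :: "'a measure \<Rightarrow> (real \<Rightarrow> 'a \<Rightarrow> real) \<Rightarrow> bool" where
  "cadlag_paths M X \<longleftrightarrow> (\<forall>\<omega>\<in>space M. \<forall>t\<ge>0.
      continuous (at_right t) (\<lambda>s. X s \<omega>) \<and>
      (t > 0 \<longrightarrow> (\<exists>l. ((\<lambda>s. X s \<omega>) \<longlongrightarrow> l) (at_left t))))"

definition left_cont_paths :: "'a measure \<Rightarrow> (real \<Rightarrow> 'a \<Rightarrow> real) \<Rightarrow> bool" where
  "left_cont_paths M X \<longleftrightarrow> (\<forall>\<omega>\<in>space M. \<forall>t>0. continuous (at_left t) (\<lambda>s. X s \<omega>))"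

definition proc_sigma :: "'a measure \<Rightarrow> (real \<Rightarrow> 'a \<Rightarrow> real) set \<Rightarrow> (real \<times> 'a) set set" where
  "proc_sigma M S = sigma_sets (proc_dom M)
     {{p\<in>proc_dom M. X (fst p) (snd p) \<in> B} | X B. X \<in> S \<and> B \<in> sets (borel :: real measure)}"

definition optional_sigma :: "'a measure \<Rightarrow> (real \<Rightarrow> 'a set set) \<Rightarrow> (real \<times> 'a) set set" where
  "optional_sigma M F = proc_sigma M {X. adapted M F X \<and> cadlag_paths M X}"

definition predictable_sigma :: "'a measure \<Rightarrow> (real \<Rightarrow> 'a set set) \<Rightarrow> (real \<times> 'a) set set" where
  "predictable_sigma M F = proc_sigma M {X. adapted M F X \<and> left_cont_paths M X}"

definition proc_measurable :: "'a measure \<Rightarrow> (real \<times> 'a) set set \<Rightarrow> (real \<Rightarrow> 'a \<Rightarrow> real) \<Rightarrow> bool" where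
  "proc_measurable M \<Sigma> X \<longleftrightarrow>
     (\<forall>B\<in>sets (borel :: real measure). {p\<in>proc_dom M. X (fst p) (snd p) \<in> B} \<in> \<Sigma>)"

definition borel_opt_sigma :: "'a measure \<Rightarrow> (real \<Rightarrow> 'a set set) \<Rightarrow> (ereal \<times> (real \<times> 'a)) set set" where
  "borel_opt_sigma M F = sigma_sets ({0..} \<times> proc_dom M)
     {(A \<inter> {0..}) \<times> C | A C. A \<in> sets (borel :: ereal measure) \<and> C \<in> optional_sigma M F}"

definition param_measurable :: "'a measure \<Rightarrow> (real \<Rightarrow> 'a set set) \<Rightarrow> (ereal \<Rightarrow> real \<Rightarrow> 'a \<Rightarrow> real) \<Rightarrow> bool" where
  "param_measurable M F Y \<longleftrightarrow>
     (\<forall>B\<in>sets (borel :: real measure).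
        {q\<in>{0..} \<times> proc_dom M. Y (fst q) (fst (snd q)) (snd (snd q)) \<in> B} \<in> borel_opt_sigma M F)"

end

theory Submission
  imports Defs
begin

(*
  Write D = [0,oo) x Omega, O(F) for the optional sigma-algebra of F and
  B[0,oo] (x) O(F) for the parametrised optional sigma-algebra on [0,oo] x D.
  Call a set A \<subseteq> D splittable if, outside an N-null set of paths,
      1_A(t,w) = 1_A'(t,w)               for t < tau(w),
      1_A(t,w) = 1_A''(tau(w),t,w)       for t >= tau(w),
  with A' optional and A'' parametrised optional.  After some elementary facts
  (lower limits of sets, step functions, dyadic approximation), the locale
  enlargement develops the proof in three steps.
  (1) Jeulin's lemma: up to an N-null set, a set E of G_a is, for every s > a,
      the preimage of a set H_s of B (x) F_s under w |-> (tau(w) /\ s, w);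
      by right continuity of F the sections of the H_s at level s give an
      F_a-set agreeing with E on {tau > a}.
  (2) The splittable sets form a sigma-algebra containing the rectangles
      (a,b] x E and {0} x E with E \<in> G_a; sampling a left-continuous
      G-adapted process at dyadic times below t shows that every G-predictable
      set is splittable.
  (3) Splitting passes to simple functions (finite sums of indicators) and to
      their pointwise limits, which gives the theorem.
*)

definition liminf_set :: "(nat \<Rightarrow> 'b set) \<Rightarrow> 'b set" where
  "liminf_set S = (\<Union>m. \<Inter>n. S (n + m))"

lemma liminf_set_eventually:
  assumes "\<forall>n\<ge>m. x \<in> S n \<longleftrightarrow> P"
  shows "x \<in> liminf_set S \<longleftrightarrow> P"
proof
  assume "x \<in> liminf_set S"
  then obtain m' where "\<forall>n. x \<in> S (n + m')" unfolding liminf_set_def by auto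
  then have "x \<in> S (m + m')" by blast
  then show P using assms by auto
next
  assume P
  then have "\<forall>n. x \<in> S (n + m)" using assms by auto
  then show "x \<in> liminf_set S" unfolding liminf_set_def by blast
qed

definition right_seq :: "real \<Rightarrow> nat \<Rightarrow> real" where
  "right_seq a n = a + 1 / real (Suc n)"

lemma right_seq_gt: "a < right_seq a n"
  unfolding right_seq_def by simp

lemma right_seq_antimono: "m \<le> n \<Longrightarrow> right_seq a n \<le> right_seq a m"
  unfolding right_seq_def by (simp add: frac_le)

lemma right_seq_below:
  assumes "a < t" shows "\<exists>n. right_seq a n < t"
proof -
  obtain n where "inverse (real (Suc n)) < t - a" using reals_Archimedean[of "t - a"] assms by auto
  then show ?thesis unfolding right_seq_def by (intro exI[of _ n]) (simp add: inverse_eq_divide)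
qed

lemma right_seq_eventually_le:
  assumes "ereal a < x" shows "\<exists>m. \<forall>n\<ge>m. ereal (right_seq a n) \<le> x"
proof (cases x)
  case (real r)
  then obtain m where "right_seq a m < r" using assms right_seq_below by auto
  then show ?thesis using right_seq_antimono real by (meson ereal_less_eq(3) less_imp_le order_trans)
qed (use assms in auto)

lemma ico_indicator_right:
  fixes c d t :: real
  shows "eventually (\<lambda>y. (if c \<le> y \<and> y < d then 1 else 0 :: real) =
    (if c \<le> t \<and> t < d then 1 else 0)) (at_right t)"
  unfolding eventually_at_right_field
proof (cases "c \<le> t \<and> t < d")
  case True
  then show "\<exists>b>t. \<forall>y>t. y < b \<longrightarrow> (if c \<le> y \<and> y < d then 1 else 0 :: real) =
    (if c \<le> t \<and> t < d then 1 else 0)" by (intro exI[of _ d]) auto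
next
  case False
  then show "\<exists>b>t. \<forall>y>t. y < b \<longrightarrow> (if c \<le> y \<and> y < d then 1 else 0 :: real) =
    (if c \<le> t \<and> t < d then 1 else 0)"
    by (cases "t < c") (auto intro: exI[of _ c] exI[of _ "t + 1"])
qed

lemma ico_indicator_left:
  fixes c d t :: real
  shows "\<exists>l. eventually (\<lambda>y. (if c \<le> y \<and> y < d then 1 else 0 :: real) = l) (at_left t)"
proof -
  consider "t \<le> c" | "c < t" "t \<le> d" | "d < t" by linarith
  then show ?thesis
  proof cases
    case 1
    then have "eventually (\<lambda>y. (if c \<le> y \<and> y < d then 1 else 0 :: real) = 0) (at_left t)"
      unfolding eventually_at_left_field by (intro exI[of _ "t - 1"]) auto
    then show ?thesis by blast
  next
    case 2
    then have "eventually (\<lambda>y. (if c \<le> y \<and> y < d then 1 else 0 :: real) = 1) (at_left t)"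
      unfolding eventually_at_left_field by (intro exI[of _ c]) auto
    then show ?thesis by blast
  next
    case 3
    then have "eventually (\<lambda>y. (if c \<le> y \<and> y < d then 1 else 0 :: real) = 0) (at_left t)"
      unfolding eventually_at_left_field by (intro exI[of _ d]) auto
    then show ?thesis by blast
  qed
qed

definition dyadic_below :: "nat \<Rightarrow> real \<Rightarrow> real" where
  "dyadic_below n t = (if t \<le> 0 then 0 else real_of_int (\<lceil>t * 2^n\<rceil> - 1) / 2^n)"

lemma dyadic_below_eq_iff:
  assumes t: "0 < t"
  shows "dyadic_below n t = real k / 2^n \<longleftrightarrow> real k / 2^n < t \<and> t \<le> (real k + 1) / 2^n"
proof -
  have p: "(0::real) < 2^n" by simp
  have "dyadic_below n t = real k / 2^n \<longleftrightarrow> real_of_int (\<lceil>t * 2^n\<rceil> - 1) = real k"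
    unfolding dyadic_below_def using t p by (auto simp: divide_cancel_right)
  also have "\<dots> \<longleftrightarrow> \<lceil>t * 2^n\<rceil> = int k + 1" by linarith
  also have "\<dots> \<longleftrightarrow> real k < t * 2^n \<and> t * 2^n \<le> real k + 1"
    unfolding ceiling_eq_iff by simp
  also have "\<dots> \<longleftrightarrow> real k / 2^n < t \<and> t \<le> (real k + 1) / 2^n"
    using p by (simp add: divide_less_eq le_divide_eq)
  finally show ?thesis .
qed

lemma dyadic_below_grid:
  assumes t: "0 < t" shows "\<exists>k::nat. dyadic_below n t = real k / 2^n"
proof -
  have "1 \<le> \<lceil>t * 2^n\<rceil>" using t by (simp add: one_le_ceiling)
  then have "real_of_int (\<lceil>t * 2^n\<rceil> - 1) = real (nat (\<lceil>t * 2^n\<rceil> - 1))" by simp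
  then show ?thesis
    unfolding dyadic_below_def using t by (intro exI[of _ "nat (\<lceil>t * 2^n\<rceil> - 1)"]) simp
qed

lemma dyadic_below_bounds:
  assumes t: "0 < t" shows "dyadic_below n t < t" "t - 1 / 2^n \<le> dyadic_below n t"
proof -
  obtain k where k: "dyadic_below n t = real k / 2^n" using dyadic_below_grid[OF t] by blast
  then have i: "real k / 2^n < t" "t \<le> (real k + 1) / 2^n" using dyadic_below_eq_iff[OF t] by auto
  show "dyadic_below n t < t" using k i by simp
  have "(real k + 1) / 2^n = real k / 2^n + 1 / 2^n" by (simp add: add_divide_distrib)
  then show "t - 1 / 2^n \<le> dyadic_below n t" using k i by simp
qed

lemma dyadic_below_tendsto:
  assumes t: "0 < t" shows "filterlim (\<lambda>n. dyadic_below n t) (at_left t) sequentially"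
proof (rule tendsto_imp_filterlim_at_left)
  show "\<forall>\<^sub>F n in sequentially. dyadic_below n t < t" using dyadic_below_bounds(1)[OF t] by simp
  have lower: "(\<lambda>n. t - 1 / 2^n) \<longlonglongrightarrow> t - 0"
    by (intro tendsto_intros) (simp add: LIMSEQ_inverse_realpow_zero[of 2, simplified inverse_eq_divide])
  show "(\<lambda>n. dyadic_below n t) \<longlonglongrightarrow> t"
    by (rule real_tendsto_sandwich[of "\<lambda>n. t - 1 / 2^n" _ _ "\<lambda>n. t"])
       (use lower dyadic_below_bounds[OF t] in \<open>auto simp: less_imp_le\<close>)
qed

lemma sum_level_sets:
  assumes "finite R" "g q \<in> R"
  shows "(\<Sum>x\<in>R. x * indicator {p. g p = x} q) = (g q :: real)"
proof -
  have "(\<Sum>x\<in>R. x * indicator {p. g p = x} q) = (\<Sum>x\<in>R. if x = g q then x else 0)"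
    by (rule sum.cong) (auto simp: indicator_def)
  also have "\<dots> = (if g q \<in> R then g q else 0)" using assms(1) by (simp add: sum.delta')
  also have "\<dots> = g q" using assms(2) by simp
  finally show ?thesis .
qed

locale enlargement =
  fixes M :: "'a measure" and F :: "real \<Rightarrow> 'a set set" and \<tau> :: "'a \<Rightarrow> ereal"
  assumes prob: "prob_space M"
    and filt: "filtration M F"
    and right_cont: "right_continuous_filtration F"
    and tau_nonneg: "\<forall>\<omega>\<in>space M. 0 \<le> \<tau> \<omega>"
begin

lemma F_sigma_algebra: "0 \<le> t \<Longrightarrow> sigma_algebra (space M) (F t)"
  using filt unfolding filtration_def by auto

lemma F_mono: "0 \<le> s \<Longrightarrow> s \<le> t \<Longrightarrow> F s \<subseteq> F t"
  using filt unfolding filtration_def by auto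

lemma F_closed:
  assumes "0 \<le> t"
  shows "F t \<subseteq> Pow (space M)" "{} \<in> F t" "\<And>A. A \<in> F t \<Longrightarrow> space M - A \<in> F t"
    "\<And>A. range A \<subseteq> F t \<Longrightarrow> (\<Union>i::nat. A i) \<in> F t"
  using F_sigma_algebra[OF assms] unfolding sigma_algebra_iff2 by auto

lemma F_subset_space: "0 \<le> t \<Longrightarrow> G \<in> F t \<Longrightarrow> G \<subseteq> space M"
  using F_closed(1) by blast

lemma F_empty: "0 \<le> t \<Longrightarrow> {} \<in> F t"
  by (rule F_closed(2))

lemma F_compl: "0 \<le> t \<Longrightarrow> A \<in> F t \<Longrightarrow> space M - A \<in> F t"
  by (rule F_closed(3))

lemma F_space: "0 \<le> t \<Longrightarrow> space M \<in> F t"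
  using F_compl[OF _ F_empty] by force

lemma F_countable_UN: "0 \<le> t \<Longrightarrow> (\<And>i::nat. A i \<in> F t) \<Longrightarrow> (\<Union>i. A i) \<in> F t"
  using F_closed(4) by blast

text \<open>A set is negligible if it is contained in a null set of
  \<open>\<sigma>(\<tau>) \<or> F\<^sub>\<infinity>\<close>; these are exactly the generators of \<open>N\<close>.\<close>

definition negligible :: "'a set \<Rightarrow> bool" where
  "negligible Z \<longleftrightarrow> (\<exists>B\<in>sjoin M (sigma_rv M \<tau>) (filt_infty M F).
      B \<in> sets M \<and> emeasure M B = 0 \<and> Z \<subseteq> B)"

lemma negligible_empty: "negligible {}"
  unfolding negligible_def sjoin_def by (auto intro: sigma_sets.Empty)

lemma negligible_subset: "negligible Z \<Longrightarrow> W \<subseteq> Z \<Longrightarrow> negligible W"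
  unfolding negligible_def by blast

lemma negligible_countable_UN:
  assumes "\<And>i::nat. negligible (Z i)" shows "negligible (\<Union>i. Z i)"
proof -
  from assms obtain B where B: "\<And>i. B i \<in> sjoin M (sigma_rv M \<tau>) (filt_infty M F)"
    "\<And>i. B i \<in> sets M" "\<And>i. emeasure M (B i) = 0" "\<And>i. Z i \<subseteq> B i"
    unfolding negligible_def by metis
  have "(\<Union>i. B i) \<in> sjoin M (sigma_rv M \<tau>) (filt_infty M F)"
    using B(1) unfolding sjoin_def by (auto intro: sigma_sets.Union)
  moreover have "emeasure M (\<Union>i. B i) = 0" using B(2,3) by (intro emeasure_UN_eq_0) auto
  ultimately show ?thesis unfolding negligible_def using B(2,4) by blast
qed

lemma negligible_Un: "negligible A \<Longrightarrow> negligible B \<Longrightarrow> negligible (A \<union> B)"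
proof -
  assume "negligible A" "negligible B"
  then have "negligible (\<Union>i::nat. if i = 0 then A else B)"
    by (intro negligible_countable_UN) simp
  moreover have "(\<Union>i::nat. if i = 0 then A else B) = A \<union> B" by auto
  ultimately show ?thesis by simp
qed

lemma negligible_finite_UN:
  "finite R \<Longrightarrow> (\<And>x. x \<in> R \<Longrightarrow> negligible (Z x)) \<Longrightarrow> negligible (\<Union>x\<in>R. Z x)"
  by (induction R rule: finite_induct) (auto intro: negligible_Un negligible_empty)

lemma negligible_in_N:
  assumes "negligible Z"
  shows "Z \<in> N_tau M F \<tau> \<and> (\<exists>B\<in>sets M. measure M B = 0 \<and> Z \<subseteq> B)"
proof -
  from assms obtain B where B: "B \<in> sjoin M (sigma_rv M \<tau>) (filt_infty M F)" "B \<in> sets M"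
    "measure M B = 0" "Z \<subseteq> B"
    unfolding negligible_def measure_def by fastforce
  then have "Z \<in> N_tau M F \<tau>"
    unfolding N_tau_def null_sigma_def by (blast intro: sigma_sets.Basic)
  with B show ?thesis by blast
qed

lemma N_generator_negligible:
  assumes "B \<in> sjoin M (sigma_rv M \<tau>) (filt_infty M F)" "B \<in> sets M" "measure M B = 0" "A \<subseteq> B"
  shows "negligible A"
proof -
  have "emeasure M B = 0"
    using assms(2,3) finite_measure.emeasure_eq_measure[OF prob_space.finite_measure[OF prob]] by simp
  with assms show ?thesis unfolding negligible_def by blast
qed

section \<open>Jeulin's lemma\<close>

definition K :: "real \<Rightarrow> 'a set set" where
  "K a = (\<Inter>s\<in>{a<..}. sjoin M (F s) (sigma_rv M (\<lambda>\<omega>. min (\<tau> \<omega>) (ereal s))))"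

definition near_K :: "real \<Rightarrow> 'a set \<Rightarrow> bool" where
  "near_K a E \<longleftrightarrow> (\<exists>E0\<in>K a. negligible ((E - E0) \<union> (E0 - E)))"

lemma near_K_sigma_sets:
  assumes "E \<in> sigma_sets (space M) S" "\<And>E. E \<in> S \<Longrightarrow> near_K a E"
  shows "near_K a E"
  using assms(1)
proof induction
  case (Basic E)
  then show ?case using assms(2) by blast
next
  case Empty
  have "{} \<in> K a" unfolding K_def sjoin_def by (auto intro: sigma_sets.Empty)
  then show ?case unfolding near_K_def by (auto intro: negligible_empty)
next
  case (Compl E)
  then obtain E0 where E0: "E0 \<in> K a" "negligible ((E - E0) \<union> (E0 - E))"
    unfolding near_K_def by blast
  have "space M - E0 \<in> K a" using E0(1) unfolding K_def sjoin_def by (auto intro: sigma_sets.Compl)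
  moreover have "negligible (((space M - E) - (space M - E0)) \<union> ((space M - E0) - (space M - E)))"
    by (rule negligible_subset[OF E0(2)]) auto
  ultimately show ?case unfolding near_K_def by blast
next
  case (Union E)
  then obtain E0 where E0: "\<And>i. E0 i \<in> K a" "\<And>i. negligible ((E i - E0 i) \<union> (E0 i - E i))"
    unfolding near_K_def by metis
  have "(\<Union>i. E0 i) \<in> K a" using E0(1) unfolding K_def sjoin_def by (auto intro: sigma_sets.Union)
  moreover have "negligible (((\<Union>i. E i) - (\<Union>i. E0 i)) \<union> ((\<Union>i. E0 i) - (\<Union>i. E i)))"
    by (rule negligible_subset[OF negligible_countable_UN[OF E0(2)]]) auto
  ultimately show ?case unfolding near_K_def by blast
qed

lemma G_near_K:
  assumes "E \<in> G_filt M F \<tau> a"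
  shows "near_K a E"
  using assms unfolding G_filt_def sjoin_def
proof (rule near_K_sigma_sets)
  fix E assume "E \<in> N_tau M F \<tau> \<union> (\<Inter>s\<in>{a<..}. sigma_sets (space M) (F s \<union> sigma_rv M (\<lambda>\<omega>. min (\<tau> \<omega>) (ereal s))))"
  then show "near_K a E"
  proof
    assume "E \<in> N_tau M F \<tau>"
    then show ?thesis unfolding N_tau_def null_sigma_def
    proof (rule near_K_sigma_sets)
      fix A assume "A \<in> {A. \<exists>B\<in>sjoin M (sigma_rv M \<tau>) (filt_infty M F). B \<in> sets M \<and> measure M B = 0 \<and> A \<subseteq> B}"
      then have "negligible A" by (blast intro: N_generator_negligible)
      moreover have "{} \<in> K a" unfolding K_def sjoin_def by (auto intro: sigma_sets.Empty)
      ultimately show "near_K a A" unfolding near_K_def by (intro bexI[of _ "{}"]) auto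
    qed
  next
    assume "E \<in> (\<Inter>s\<in>{a<..}. sigma_sets (space M) (F s \<union> sigma_rv M (\<lambda>\<omega>. min (\<tau> \<omega>) (ereal s))))"
    then have "E \<in> K a" unfolding K_def sjoin_def by simp
    then show ?thesis unfolding near_K_def by (auto intro!: bexI[of _ E] negligible_empty)
  qed
qed

definition prod_sets :: "real \<Rightarrow> (ereal \<times> 'a) set set" where
  "prod_sets s = sigma_sets (UNIV \<times> space M) {U \<times> G | U G. U \<in> sets borel \<and> G \<in> F s}"

lemma stopped_join_preimage:
  assumes s: "0 \<le> s" and E: "E \<in> sjoin M (F s) (sigma_rv M (\<lambda>\<omega>. min (\<tau> \<omega>) (ereal s)))"
  shows "\<exists>H\<in>prod_sets s. E = {\<omega>\<in>space M. (min (\<tau> \<omega>) (ereal s), \<omega>) \<in> H}"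
  using E unfolding sjoin_def
proof induction
  case (Basic E)
  then show ?case
  proof
    assume "E \<in> F s"
    moreover have "UNIV \<in> sets (borel :: ereal measure)" using sets.top[of borel] by simp
    ultimately have "UNIV \<times> E \<in> prod_sets s" unfolding prod_sets_def by (blast intro: sigma_sets.Basic)
    moreover have "E \<subseteq> space M" using F_subset_space[OF s] \<open>E \<in> F s\<close> by blast
    ultimately show ?thesis by (intro bexI[of _ "UNIV \<times> E"]) auto
  next
    assume "E \<in> sigma_rv M (\<lambda>\<omega>. min (\<tau> \<omega>) (ereal s))"
    then obtain B where B: "B \<in> sets borel" "E = (\<lambda>\<omega>. min (\<tau> \<omega>) (ereal s)) -` B \<inter> space M"
      unfolding sigma_rv_def by auto
    have "B \<times> space M \<in> prod_sets s"
      unfolding prod_sets_def using B F_space[OF s] by (intro sigma_sets.Basic) auto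
    then show ?thesis using B by (intro bexI[of _ "B \<times> space M"]) auto
  qed
next
  case Empty
  show ?case by (rule bexI[of _ "{}"]) (auto simp: prod_sets_def intro: sigma_sets.Empty)
next
  case (Compl E)
  then obtain H where H: "H \<in> prod_sets s" "E = {\<omega>\<in>space M. (min (\<tau> \<omega>) (ereal s), \<omega>) \<in> H}"
    by blast
  have "UNIV \<times> space M - H \<in> prod_sets s" using H(1) unfolding prod_sets_def by (rule sigma_sets.Compl)
  then show ?case using H(2) by (intro bexI[of _ "UNIV \<times> space M - H"]) auto
next
  case (Union E)
  then have "\<forall>i. \<exists>H. H \<in> prod_sets s \<and> E i = {\<omega>\<in>space M. (min (\<tau> \<omega>) (ereal s), \<omega>) \<in> H}"
    by blast
  from choice[OF this] obtain H where H: "\<And>i. H i \<in> prod_sets s"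
    "\<And>i. E i = {\<omega>\<in>space M. (min (\<tau> \<omega>) (ereal s), \<omega>) \<in> H i}"
    by blast
  have "(\<Union>i. H i) \<in> prod_sets s" using H(1) unfolding prod_sets_def by (intro sigma_sets.Union) auto
  moreover have "(\<Union>i. E i) = {\<omega>\<in>space M. (min (\<tau> \<omega>) (ereal s), \<omega>) \<in> (\<Union>i. H i)}"
    unfolding H(2) by blast
  ultimately show ?case by blast
qed

lemma prod_sets_section:
  assumes s: "0 \<le> s" and H: "H \<in> prod_sets s"
  shows "{\<omega>\<in>space M. (u, \<omega>) \<in> H} \<in> F s"
  using H unfolding prod_sets_def
proof induction
  case (Basic H)
  then obtain U G where UG: "H = U \<times> G" "G \<in> F s" by auto
  then have "{\<omega>\<in>space M. (u, \<omega>) \<in> H} = (if u \<in> U then G else {})"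
    using F_subset_space[OF s] by auto
  then show ?case using UG F_empty[OF s] by simp
next
  case Empty
  then show ?case using F_empty[OF s] by simp
next
  case (Compl H)
  have "{\<omega>\<in>space M. (u, \<omega>) \<in> UNIV \<times> space M - H} = space M - {\<omega>\<in>space M. (u, \<omega>) \<in> H}" by auto
  then show ?case using Compl F_compl[OF s] by simp
next
  case (Union H)
  have "{\<omega>\<in>space M. (u, \<omega>) \<in> (\<Union>i. H i)} = (\<Union>i. {\<omega>\<in>space M. (u, \<omega>) \<in> H i})" by auto
  then show ?case using Union F_countable_UN[OF s] by auto
qed

lemma liminf_set_in_F:
  assumes a: "0 \<le> a" and S: "\<And>n. S n \<in> F (right_seq a n)"
  shows "liminf_set S \<in> F a"
proof -
  have "liminf_set S \<in> F s" if "a < s" for s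
  proof -
    obtain k where k: "right_seq a k < s" using right_seq_below[OF \<open>a < s\<close>] by blast
    have s0: "0 \<le> s" using a that by simp
    have "S n \<in> F s" if "k \<le> n" for n
      using S[of n] F_mono[of "right_seq a n" s] right_seq_antimono[OF that, of a] k
        right_seq_gt[of a n] a by force
    then have "(\<lambda>n. S (n + (m + k))) ` UNIV \<subseteq> F s" for m by auto
    then have "(\<Inter>n. S (n + (m + k))) \<in> F s" for m
      using sigma_algebra.countable_INT[OF F_sigma_algebra[OF s0], of "\<lambda>n. S (n + (m + k))" UNIV]
      by simp
    then have "(\<Union>m. \<Inter>n. S (n + (m + k))) \<in> F s" by (rule F_countable_UN[OF s0])
    moreover have "(\<Union>m. \<Inter>n. S (n + (m + k))) = liminf_set S"
      unfolding liminf_set_def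
    proof (intro antisym subsetI)
      fix x assume "x \<in> (\<Union>m. \<Inter>n. S (n + m))"
      then obtain m where "\<forall>n. x \<in> S (n + m)" by auto
      then have "\<forall>n. x \<in> S (n + (m + k))" by (metis add.assoc add.commute)
      then show "x \<in> (\<Union>m. \<Inter>n. S (n + (m + k)))" by blast
    qed auto
    ultimately show ?thesis by simp
  qed
  with a right_cont show ?thesis unfolding right_continuous_filtration_def by blast
qed

lemma jeulin:
  assumes a: "0 \<le> a" and E: "E \<in> G_filt M F \<tau> a"
  obtains E0 H E' where "negligible ((E - E0) \<union> (E0 - E))"
    and "\<And>n. H n \<in> prod_sets (right_seq a n)"
    and "\<And>n. E0 = {\<omega>\<in>space M. (min (\<tau> \<omega>) (ereal (right_seq a n)), \<omega>) \<in> H n}"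
    and "E' \<in> F a"
    and "\<And>\<omega>. \<omega> \<in> space M \<Longrightarrow> ereal a < \<tau> \<omega> \<Longrightarrow> \<omega> \<in> E0 \<longleftrightarrow> \<omega> \<in> E'"
proof -
  have seq_nonneg: "0 \<le> right_seq a n" for n using right_seq_gt[of a n] a by simp
  from G_near_K[OF E] obtain E0 where E0: "E0 \<in> K a" "negligible ((E - E0) \<union> (E0 - E))"
    unfolding near_K_def by blast
  have "\<exists>H. H \<in> prod_sets (right_seq a n) \<and>
      E0 = {\<omega>\<in>space M. (min (\<tau> \<omega>) (ereal (right_seq a n)), \<omega>) \<in> H}" for n
  proof -
    have "E0 \<in> sjoin M (F (right_seq a n)) (sigma_rv M (\<lambda>\<omega>. min (\<tau> \<omega>) (ereal (right_seq a n))))"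
      using E0(1) right_seq_gt[of a n] unfolding K_def by blast
    from stopped_join_preimage[OF seq_nonneg this] show ?thesis by blast
  qed
  then have "\<forall>n. \<exists>H. H \<in> prod_sets (right_seq a n) \<and>
      E0 = {\<omega>\<in>space M. (min (\<tau> \<omega>) (ereal (right_seq a n)), \<omega>) \<in> H}" by blast
  from choice[OF this] obtain H where H: "\<And>n. H n \<in> prod_sets (right_seq a n)"
    "\<And>n. E0 = {\<omega>\<in>space M. (min (\<tau> \<omega>) (ereal (right_seq a n)), \<omega>) \<in> H n}"
    by blast
  define E' where "E' = liminf_set (\<lambda>n. {\<omega>\<in>space M. (ereal (right_seq a n), \<omega>) \<in> H n})"
  have "E' \<in> F a"
    unfolding E'_def by (rule liminf_set_in_F[OF a prod_sets_section[OF seq_nonneg H(1)]])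
  moreover have "\<omega> \<in> E0 \<longleftrightarrow> \<omega> \<in> E'" if \<omega>: "\<omega> \<in> space M" "ereal a < \<tau> \<omega>" for \<omega>
  proof -
    obtain m where m: "\<forall>n\<ge>m. ereal (right_seq a n) \<le> \<tau> \<omega>"
      using right_seq_eventually_le[OF \<omega>(2)] by blast
    have "\<forall>n\<ge>m. \<omega> \<in> {\<omega>\<in>space M. (ereal (right_seq a n), \<omega>) \<in> H n} \<longleftrightarrow> \<omega> \<in> E0"
    proof (intro allI impI)
      fix n assume "m \<le> n"
      then have "min (\<tau> \<omega>) (ereal (right_seq a n)) = ereal (right_seq a n)"
        using m by (simp add: min_absorb2)
      then show "\<omega> \<in> {\<omega>\<in>space M. (ereal (right_seq a n), \<omega>) \<in> H n} \<longleftrightarrow> \<omega> \<in> E0"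
        using H(2)[of n] \<omega>(1) by auto
    qed
    from liminf_set_eventually[OF this] show ?thesis unfolding E'_def by simp
  qed
  ultimately show ?thesis using that E0(2) H by blast
qed

lemma repr_below:
  assumes E0: "\<And>n. E0 = {\<omega>\<in>space M. (min (\<tau> \<omega>) (ereal (right_seq a n)), \<omega>) \<in> H n}"
    and "\<omega> \<in> space M" "\<tau> \<omega> \<le> ereal a"
  shows "\<omega> \<in> E0 \<longleftrightarrow> (\<tau> \<omega>, \<omega>) \<in> H n"
proof -
  have "\<tau> \<omega> \<le> ereal (right_seq a n)"
    using assms(3) right_seq_gt[of a n] by (meson ereal_less_eq(3) less_imp_le order_trans)
  then show ?thesis using E0[of n] assms(2) by (simp add: min_absorb1)
qed

section \<open>Optional and parametrised optional sets\<close>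

abbreviation D :: "(real \<times> 'a) set" where "D \<equiv> proc_dom M"
abbreviation Opt :: "(real \<times> 'a) set set" where "Opt \<equiv> optional_sigma M F"
abbreviation ParOpt :: "(ereal \<times> real \<times> 'a) set set" where "ParOpt \<equiv> borel_opt_sigma M F"

lemma D_iff: "(t, \<omega>) \<in> D \<longleftrightarrow> 0 \<le> t \<and> \<omega> \<in> space M"
  unfolding proc_dom_def by auto

lemma Opt_sigma_algebra: "sigma_algebra D Opt"
  unfolding optional_sigma_def proc_sigma_def by (rule sigma_algebra_sigma_sets) auto

lemma Opt_space: "D \<in> Opt"
proof -
  interpret O: sigma_algebra D Opt by (rule Opt_sigma_algebra)
  show ?thesis by simp
qed

lemma ParOpt_sigma_algebra: "sigma_algebra ({0..} \<times> D) ParOpt"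
proof -
  interpret O: sigma_algebra D Opt by (rule Opt_sigma_algebra)
  show ?thesis unfolding borel_opt_sigma_def
    by (rule sigma_algebra_sigma_sets) (use O.sets_into_space in auto)
qed

lemma ParOpt_rectangle:
  "A \<in> sets (borel :: ereal measure) \<Longrightarrow> C \<in> Opt \<Longrightarrow> (A \<inter> {0..}) \<times> C \<in> ParOpt"
  unfolding borel_opt_sigma_def by (rule sigma_sets.Basic) blast

definition rect :: "real set \<Rightarrow> 'a set \<Rightarrow> (real \<times> 'a) set" where
  "rect J G = {p\<in>D. fst p \<in> J \<and> snd p \<in> G}"

text \<open>\<open>[c,d) \<times> G\<close> with \<open>G \<in> F\<^sub>c\<close> is the level set of a cadlag adapted indicator process.\<close>

lemma rect_ico_optional:
  assumes c: "0 \<le> c" and G: "G \<in> F c"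
  shows "rect {c..<d} G \<in> Opt"
proof -
  define X where "X = (\<lambda>t \<omega>. if c \<le> t \<and> t < d \<and> \<omega> \<in> G then 1 else (0::real))"
  have G_space: "G \<subseteq> space M" using F_subset_space[OF c G] .
  have "adapted M F X" unfolding adapted_def
  proof (intro allI impI ballI)
    fix t :: real and B :: "real set" assume t: "0 \<le> t"
    show "{\<omega>\<in>space M. X t \<omega> \<in> B} \<in> F t"
    proof (cases "c \<le> t \<and> t < d")
      case True
      then have GF: "G \<in> F t" using F_mono[OF c, of t] G by auto
      have eq: "{\<omega>\<in>space M. X t \<omega> \<in> B} =
          (if 1 \<in> B then G else {}) \<union> (if 0 \<in> B then space M - G else {})"
        unfolding X_def using True G_space by auto
      show ?thesis unfolding eq using GF F_compl[OF t GF] F_empty[OF t] F_space[OF t] G_space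
        by (cases "1 \<in> B"; cases "0 \<in> B") (auto simp: Un_absorb1)
    next
      case False
      then have "{\<omega>\<in>space M. X t \<omega> \<in> B} = (if 0 \<in> B then space M else {})"
        unfolding X_def by auto
      then show ?thesis using F_space[OF t] F_empty[OF t] by simp
    qed
  qed
  moreover have "cadlag_paths M X" unfolding cadlag_paths_def
  proof (intro ballI allI impI conjI)
    fix \<omega> and t :: real
    show "continuous (at_right t) (\<lambda>s. X s \<omega>)"
    proof (cases "\<omega> \<in> G")
      case True
      then have "(\<lambda>s. X s \<omega>) = (\<lambda>y. if c \<le> y \<and> y < d then 1 else 0)" unfolding X_def by auto
      then show ?thesis unfolding continuous_within
        using True tendsto_eventually[OF ico_indicator_right, of c d t] by (simp add: X_def)
    qed (simp add: X_def)
    show "\<exists>l. ((\<lambda>s. X s \<omega>) \<longlongrightarrow> l) (at_left t)"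
    proof (cases "\<omega> \<in> G")
      case True
      then have path: "(\<lambda>s. X s \<omega>) = (\<lambda>y. if c \<le> y \<and> y < d then 1 else 0)"
        unfolding X_def by auto
      obtain l where "eventually (\<lambda>y. (if c \<le> y \<and> y < d then 1 else 0 :: real) = l) (at_left t)"
        using ico_indicator_left by blast
      then show ?thesis unfolding path by (blast intro: tendsto_eventually)
    qed (auto simp: X_def)
  qed
  ultimately have "{p\<in>D. X (fst p) (snd p) \<in> {1}} \<in> Opt"
    unfolding optional_sigma_def proc_sigma_def
    by (intro sigma_sets.Basic CollectI exI[of _ X] exI[of _ "{1::real}"]) simp
  moreover have "{p\<in>D. X (fst p) (snd p) \<in> {1}} = rect {c..<d} G"
    unfolding rect_def X_def by auto
  ultimately show ?thesis by simp
qed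

lemma rect_oc_optional:
  assumes c: "0 \<le> c" and G: "G \<in> F c"
  shows "rect {c<..d} G \<in> Opt"
proof -
  interpret O: sigma_algebra D Opt by (rule Opt_sigma_algebra)
  have "rect {right_seq c m..<right_seq d n} G \<in> Opt" for m n
    using rect_ico_optional[of "right_seq c m" G] F_mono[of c "right_seq c m"] c G right_seq_gt[of c m]
    by auto
  then have "(\<Union>m. \<Inter>n. rect {right_seq c m..<right_seq d n} G) \<in> Opt"
    by (intro O.countable_nat_UN O.countable_INT) auto
  moreover have "(\<exists>m. \<forall>n. right_seq c m \<le> t \<and> t < right_seq d n) \<longleftrightarrow> c < t \<and> t \<le> d" for t
  proof
    assume "\<exists>m. \<forall>n. right_seq c m \<le> t \<and> t < right_seq d n"
    then obtain m where m: "\<forall>n. right_seq c m \<le> t \<and> t < right_seq d n" by blast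
    then have "c < t" using right_seq_gt[of c m] by fastforce
    moreover have "t \<le> d"
      using m right_seq_below[of d t] by (meson less_asym not_le)
    ultimately show "c < t \<and> t \<le> d" by blast
  next
    assume t: "c < t \<and> t \<le> d"
    then obtain m where "right_seq c m < t" using right_seq_below by blast
    moreover have "t < right_seq d n" for n using t right_seq_gt[of d n] by linarith
    ultimately show "\<exists>m. \<forall>n. right_seq c m \<le> t \<and> t < right_seq d n" by (auto intro: less_imp_le)
  qed
  then have "(\<Union>m. \<Inter>n. rect {right_seq c m..<right_seq d n} G) = rect {c<..d} G"
    unfolding rect_def by auto
  ultimately show ?thesis by simp
qed

lemma rect_0_optional:
  assumes G: "G \<in> F 0"
  shows "rect {0} G \<in> Opt"
proof -
  interpret O: sigma_algebra D Opt by (rule Opt_sigma_algebra)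
  have "rect {0..<right_seq 0 n} G \<in> Opt" for n by (rule rect_ico_optional[OF _ G]) simp
  then have "(\<Inter>n. rect {0..<right_seq 0 n} G) \<in> Opt" by (intro O.countable_INT) auto
  moreover have "(\<forall>n. 0 \<le> t \<and> t < right_seq 0 n) \<longleftrightarrow> t = 0" for t :: real
  proof
    assume h: "\<forall>n. 0 \<le> t \<and> t < right_seq 0 n"
    show "t = 0"
    proof (rule ccontr)
      assume "t \<noteq> 0"
      with h have "0 < t" by force
      then obtain n where "right_seq 0 n < t" using right_seq_below by blast
      with h show False by (meson less_asym)
    qed
  qed (use right_seq_gt[of 0] in auto)
  then have "(\<Inter>n. rect {0..<right_seq 0 n} G) = rect {0} G" unfolding rect_def by auto
  ultimately show ?thesis by simp
qed

lemma prod_sets_ParOpt: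
  assumes s: "0 \<le> s" and J: "\<forall>G\<in>F s. rect J G \<in> Opt" and H: "H \<in> prod_sets s"
  shows "{q\<in>{0..} \<times> D. fst (snd q) \<in> J \<and> (fst q, snd (snd q)) \<in> H} \<in> ParOpt"
  using H unfolding prod_sets_def
proof induction
  case (Basic H)
  then obtain U G where UG: "H = U \<times> G" "U \<in> sets borel" "G \<in> F s" by blast
  have "{q\<in>{0..} \<times> D. fst (snd q) \<in> J \<and> (fst q, snd (snd q)) \<in> H} = (U \<inter> {0..}) \<times> rect J G"
    unfolding UG(1) rect_def by auto
  then show ?case using ParOpt_rectangle[OF UG(2)] J UG(3) by simp
next
  case Empty
  interpret P: sigma_algebra "{0..} \<times> D" ParOpt by (rule ParOpt_sigma_algebra)
  show ?case by simp
next
  case (Compl H)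
  interpret P: sigma_algebra "{0..} \<times> D" ParOpt by (rule ParOpt_sigma_algebra)
  have "{q\<in>{0..} \<times> D. fst (snd q) \<in> J \<and> (fst q, snd (snd q)) \<in> UNIV \<times> space M - H} =
     (UNIV \<inter> {0..}) \<times> rect J (space M) - {q\<in>{0..} \<times> D. fst (snd q) \<in> J \<and> (fst q, snd (snd q)) \<in> H}"
    unfolding rect_def proc_dom_def by auto
  moreover have "(UNIV \<inter> {0..}) \<times> rect J (space M) \<in> ParOpt"
    using ParOpt_rectangle[of UNIV] sets.top[of borel] J F_space[OF s] by simp
  ultimately show ?case using Compl.IH by (simp add: P.Diff)
next
  case (Union H)
  interpret P: sigma_algebra "{0..} \<times> D" ParOpt by (rule ParOpt_sigma_algebra)
  have "{q\<in>{0..} \<times> D. fst (snd q) \<in> J \<and> (fst q, snd (snd q)) \<in> (\<Union>i. H i)} =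
    (\<Union>i. {q\<in>{0..} \<times> D. fst (snd q) \<in> J \<and> (fst q, snd (snd q)) \<in> H i})" by blast
  moreover have "(\<Union>i. {q\<in>{0..} \<times> D. fst (snd q) \<in> J \<and> (fst q, snd (snd q)) \<in> H i}) \<in> ParOpt"
    using Union.IH by (intro P.countable_nat_UN) auto
  ultimately show ?case by simp
qed

section \<open>Splittable sets\<close>

definition splits :: "(real \<times> 'a) set \<Rightarrow> (real \<times> 'a) set \<Rightarrow> (ereal \<times> real \<times> 'a) set \<Rightarrow> 'a set \<Rightarrow> bool"
  where "splits A A' A'' Z \<longleftrightarrow> (\<forall>\<omega>\<in>space M - Z. \<forall>t\<ge>0.
     (t, \<omega>) \<in> A \<longleftrightarrow> (if ereal t < \<tau> \<omega> then (t, \<omega>) \<in> A' else (\<tau> \<omega>, t, \<omega>) \<in> A''))"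

definition Splittable :: "(real \<times> 'a) set set" where
  "Splittable = {A. A \<subseteq> D \<and> (\<exists>A'\<in>Opt. \<exists>A''\<in>ParOpt. \<exists>Z. negligible Z \<and> splits A A' A'' Z)}"

lemma SplittableI:
  "A \<subseteq> D \<Longrightarrow> A' \<in> Opt \<Longrightarrow> A'' \<in> ParOpt \<Longrightarrow> negligible Z \<Longrightarrow> splits A A' A'' Z \<Longrightarrow> A \<in> Splittable"
  unfolding Splittable_def by blast

lemma splits_compl:
  assumes "splits A A' A'' Z"
  shows "splits (D - A) (D - A') ({0..} \<times> D - A'') Z"
  unfolding splits_def
proof (intro ballI allI impI)
  fix \<omega> and t :: real assume \<omega>: "\<omega> \<in> space M - Z" and t: "0 \<le> t"
  then have "0 \<le> \<tau> \<omega>" using tau_nonneg by auto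
  with assms \<omega> t show "(t, \<omega>) \<in> D - A \<longleftrightarrow>
      (if ereal t < \<tau> \<omega> then (t, \<omega>) \<in> D - A' else (\<tau> \<omega>, t, \<omega>) \<in> {0..} \<times> D - A'')"
    unfolding splits_def by (auto simp: D_iff)
qed

lemma splits_countable_UN:
  assumes "\<And>i::nat. splits (A i) (A' i) (A'' i) (Z i)"
  shows "splits (\<Union>i. A i) (\<Union>i. A' i) (\<Union>i. A'' i) (\<Union>i. Z i)"
  unfolding splits_def
proof (intro ballI allI impI)
  fix \<omega> and t :: real assume "\<omega> \<in> space M - (\<Union>i. Z i)" "0 \<le> t"
  then have "\<forall>i. (t, \<omega>) \<in> A i \<longleftrightarrow>
      (if ereal t < \<tau> \<omega> then (t, \<omega>) \<in> A' i else (\<tau> \<omega>, t, \<omega>) \<in> A'' i)"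
    using assms unfolding splits_def by blast
  then show "(t, \<omega>) \<in> (\<Union>i. A i) \<longleftrightarrow>
      (if ereal t < \<tau> \<omega> then (t, \<omega>) \<in> (\<Union>i. A' i) else (\<tau> \<omega>, t, \<omega>) \<in> (\<Union>i. A'' i))"
    by (cases "ereal t < \<tau> \<omega>") auto
qed

lemma Splittable_sigma_algebra: "sigma_algebra D Splittable"
  unfolding sigma_algebra_iff2
proof (intro conjI allI impI ballI)
  interpret O: sigma_algebra D Opt by (rule Opt_sigma_algebra)
  interpret P: sigma_algebra "{0..} \<times> D" ParOpt by (rule ParOpt_sigma_algebra)
  show "Splittable \<subseteq> Pow D" unfolding Splittable_def by auto
  show "{} \<in> Splittable"
    by (rule SplittableI[of _ "{}" "{}" "{}"]) (auto simp: splits_def intro: negligible_empty)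
  show "D - A \<in> Splittable" if "A \<in> Splittable" for A
    using that splits_compl unfolding Splittable_def by blast
  show "\<Union>(range A) \<in> Splittable" if "range A \<subseteq> Splittable" for A :: "nat \<Rightarrow> _"
  proof -
    have "A i \<in> Splittable" for i using that by blast
    have "\<forall>i. \<exists>A' A'' Z. A' \<in> Opt \<and> A'' \<in> ParOpt \<and> negligible Z \<and> splits (A i) A' A'' Z"
    proof
      fix i
      from \<open>A i \<in> Splittable\<close> obtain A' A'' Z where
        "A' \<in> Opt" "A'' \<in> ParOpt" "negligible Z" "splits (A i) A' A'' Z"
        unfolding Splittable_def by blast
      then show "\<exists>A' A'' Z. A' \<in> Opt \<and> A'' \<in> ParOpt \<and> negligible Z \<and> splits (A i) A' A'' Z"
        by blast
    qed
    then obtain A' A'' Z where AZ: "\<And>i. A' i \<in> Opt" "\<And>i. A'' i \<in> ParOpt" "\<And>i. negligible (Z i)"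
      "\<And>i. splits (A i) (A' i) (A'' i) (Z i)"
      by metis
    have "\<Union>(range A) \<subseteq> D" using \<open>\<And>i. A i \<in> Splittable\<close> unfolding Splittable_def by blast
    moreover have "(\<Union>i. A' i) \<in> Opt" "(\<Union>i. A'' i) \<in> ParOpt" using AZ(1,2) by auto
    ultimately show ?thesis
      using negligible_countable_UN[OF AZ(3)] splits_countable_UN[OF AZ(4)] by (rule SplittableI)
  qed
qed

text \<open>Rectangles \<open>(a,b] \<times> E\<close> with \<open>E \<in> G\<^sub>a\<close> are splittable: before \<open>\<tau>\<close> use the
  \<open>F\<^sub>a\<close>-set \<open>E'\<close> of Jeulin's lemma; after \<open>\<tau>\<close>, either \<open>\<tau> > a\<close> and again \<open>E'\<close> works,
  or \<open>\<tau> \<le> a\<close> and \<open>E\<close> is read off from the sets \<open>H n\<close> evaluated at \<open>\<tau>\<close>.\<close>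

lemma rect_oc_splittable:
  assumes a: "0 \<le> a" and E: "E \<in> G_filt M F \<tau> a"
  shows "rect {a<..b} E \<in> Splittable"
proof -
  interpret P: sigma_algebra "{0..} \<times> D" ParOpt by (rule ParOpt_sigma_algebra)
  obtain E0 H E' where null: "negligible ((E - E0) \<union> (E0 - E))"
    and H: "\<And>n. H n \<in> prod_sets (right_seq a n)"
    and E0: "\<And>n. E0 = {\<omega>\<in>space M. (min (\<tau> \<omega>) (ereal (right_seq a n)), \<omega>) \<in> H n}"
    and E': "E' \<in> F a" "\<And>\<omega>. \<omega> \<in> space M \<Longrightarrow> ereal a < \<tau> \<omega> \<Longrightarrow> \<omega> \<in> E0 \<longleftrightarrow> \<omega> \<in> E'"
    using jeulin[OF a E] by blast
  define late where "late = ({ereal a<..} \<inter> {0..}) \<times> rect {a<..b} E'"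
  define early where "early = (\<Union>n. {q\<in>{0..} \<times> D. fst (snd q) \<in> {right_seq a n<..b} \<and>
      (fst q, snd (snd q)) \<in> H n}) \<inter> (({..ereal a} \<inter> {0..}) \<times> D)"
  have opt: "rect {a<..b} E' \<in> Opt" by (rule rect_oc_optional[OF a E'(1)])
  have late: "late \<in> ParOpt" unfolding late_def by (rule ParOpt_rectangle[OF _ opt]) simp
  moreover have early: "early \<in> ParOpt"
  proof -
    have "0 \<le> right_seq a n" for n using right_seq_gt[of a n] a by simp
    then have "{q\<in>{0..} \<times> D. fst (snd q) \<in> {right_seq a n<..b} \<and> (fst q, snd (snd q)) \<in> H n}
        \<in> ParOpt" for n
      using prod_sets_ParOpt[OF _ _ H] rect_oc_optional by blast
    moreover have "({..ereal a} \<inter> {0..}) \<times> D \<in> ParOpt"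
      by (rule ParOpt_rectangle) (simp_all add: Opt_space)
    ultimately show ?thesis unfolding early_def by (intro P.Int P.countable_nat_UN) auto
  qed
  moreover have splits: "splits (rect {a<..b} E) (rect {a<..b} E') (late \<union> early) ((E - E0) \<union> (E0 - E))"
    unfolding splits_def
  proof (intro ballI allI impI)
    fix \<omega> and t :: real assume \<omega>: "\<omega> \<in> space M - ((E - E0) \<union> (E0 - E))" and t: "0 \<le> t"
    then have \<omega>M: "\<omega> \<in> space M" and "0 \<le> \<tau> \<omega>" using tau_nonneg by auto
    have L: "(t, \<omega>) \<in> rect {a<..b} E \<longleftrightarrow> a < t \<and> t \<le> b \<and> \<omega> \<in> E0"
      unfolding rect_def using t \<omega> by (auto simp: D_iff)
    consider "ereal a < \<tau> \<omega>" | "\<tau> \<omega> \<le> ereal a" by force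
    then show "(t, \<omega>) \<in> rect {a<..b} E \<longleftrightarrow> (if ereal t < \<tau> \<omega> then (t, \<omega>) \<in> rect {a<..b} E'
        else (\<tau> \<omega>, t, \<omega>) \<in> late \<union> early)"
    proof cases
      case 1
      then have "(\<tau> \<omega>, t, \<omega>) \<in> late \<union> early \<longleftrightarrow> (t, \<omega>) \<in> rect {a<..b} E'"
        unfolding late_def early_def using \<open>0 \<le> \<tau> \<omega>\<close> t \<omega>M by (auto simp: rect_def D_iff)
      moreover have "(t, \<omega>) \<in> rect {a<..b} E' \<longleftrightarrow> a < t \<and> t \<le> b \<and> \<omega> \<in> E'"
        unfolding rect_def using t \<omega>M by (auto simp: D_iff)
      ultimately show ?thesis using L E'(2)[OF \<omega>M 1] by (simp add: conj_commute)
    next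
      case 2
      have not_before: "\<not> ereal t < \<tau> \<omega>" if "a < t"
      proof -
        have "\<tau> \<omega> < ereal t" using 2 that by (simp add: le_less_trans)
        then show ?thesis by (simp add: not_less less_imp_le)
      qed
      have "(\<tau> \<omega>, t, \<omega>) \<in> late \<union> early \<longleftrightarrow> (\<exists>n. right_seq a n < t \<and> t \<le> b \<and> (\<tau> \<omega>, \<omega>) \<in> H n)"
        unfolding late_def early_def using 2 \<open>0 \<le> \<tau> \<omega>\<close> t \<omega>M by (auto simp: D_iff)
      also have "\<dots> \<longleftrightarrow> a < t \<and> t \<le> b \<and> \<omega> \<in> E0"
      proof
        assume "\<exists>n. right_seq a n < t \<and> t \<le> b \<and> (\<tau> \<omega>, \<omega>) \<in> H n"
        then obtain n where "right_seq a n < t" "t \<le> b" "(\<tau> \<omega>, \<omega>) \<in> H n" by blast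
        then show "a < t \<and> t \<le> b \<and> \<omega> \<in> E0"
          using right_seq_gt[of a n] repr_below[OF E0 \<omega>M 2] by auto
      next
        assume h: "a < t \<and> t \<le> b \<and> \<omega> \<in> E0"
        then obtain n where "right_seq a n < t" using right_seq_below by blast
        then show "\<exists>n. right_seq a n < t \<and> t \<le> b \<and> (\<tau> \<omega>, \<omega>) \<in> H n"
          using h repr_below[OF E0 \<omega>M 2] by blast
      qed
      finally have "(\<tau> \<omega>, t, \<omega>) \<in> late \<union> early \<longleftrightarrow> a < t \<and> t \<le> b \<and> \<omega> \<in> E0" .
      moreover have "(t, \<omega>) \<in> rect {a<..b} E' \<Longrightarrow> a < t" by (simp add: rect_def)
      ultimately show ?thesis using L not_before by auto
    qed
  qed
  ultimately show ?thesis
    by (intro SplittableI[OF _ opt P.Un[OF late early] null splits]) (auto simp: rect_def)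
qed

text \<open>Rectangles \<open>{0} \<times> E\<close> with \<open>E \<in> G\<^sub>0\<close> are splittable; on \<open>{\<tau> = 0}\<close> the sections
  of the sets \<open>H n\<close> at level \<open>0\<close> give an \<open>F\<^sub>0\<close>-set agreeing with \<open>E\<close>.\<close>

lemma rect_0_splittable:
  assumes E: "E \<in> G_filt M F \<tau> 0"
  shows "rect {0} E \<in> Splittable"
proof -
  obtain E0 H E' where null: "negligible ((E - E0) \<union> (E0 - E))"
    and H: "\<And>n. H n \<in> prod_sets (right_seq 0 n)"
    and E0: "\<And>n. E0 = {\<omega>\<in>space M. (min (\<tau> \<omega>) (ereal (right_seq 0 n)), \<omega>) \<in> H n}"
    and E': "E' \<in> F 0" "\<And>\<omega>. \<omega> \<in> space M \<Longrightarrow> ereal 0 < \<tau> \<omega> \<Longrightarrow> \<omega> \<in> E0 \<longleftrightarrow> \<omega> \<in> E'"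
    using jeulin[OF order_refl E] by blast
  define E'' where "E'' = liminf_set (\<lambda>n. {\<omega>\<in>space M. (0, \<omega>) \<in> H n})"
  have nonneg: "0 \<le> right_seq 0 n" for n using right_seq_gt[of 0 n] by simp
  have "E'' \<in> F 0"
    unfolding E''_def by (rule liminf_set_in_F[OF order_refl prod_sets_section[OF nonneg H]])
  then have "rect {0} E'' \<in> Opt" by (rule rect_0_optional)
  moreover have "UNIV \<in> sets (borel :: ereal measure)" using sets.top[of borel] by simp
  ultimately have A'': "(UNIV \<inter> {0..}) \<times> rect {0} E'' \<in> ParOpt"
    by (intro ParOpt_rectangle)
  have E'': "\<omega> \<in> E0 \<longleftrightarrow> \<omega> \<in> E''" if \<omega>M: "\<omega> \<in> space M" and "\<tau> \<omega> = 0" for \<omega>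
  proof -
    have "\<tau> \<omega> \<le> ereal 0" using \<open>\<tau> \<omega> = 0\<close> by (simp add: zero_ereal_def)
    then have "\<forall>n\<ge>0. \<omega> \<in> {\<omega>\<in>space M. (0, \<omega>) \<in> H n} \<longleftrightarrow> \<omega> \<in> E0"
      using repr_below[OF E0 \<omega>M] \<open>\<tau> \<omega> = 0\<close> \<omega>M by simp
    from liminf_set_eventually[OF this] show ?thesis unfolding E''_def by simp
  qed
  have splits: "splits (rect {0} E) (rect {0} E') ((UNIV \<inter> {0..}) \<times> rect {0} E'')
      ((E - E0) \<union> (E0 - E))"
    unfolding splits_def
  proof (intro ballI allI impI)
    fix \<omega> and t :: real assume \<omega>: "\<omega> \<in> space M - ((E - E0) \<union> (E0 - E))" and t: "0 \<le> t"
    then have \<omega>M: "\<omega> \<in> space M" and "0 \<le> \<tau> \<omega>" using tau_nonneg by auto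
    have L: "(t, \<omega>) \<in> rect {0} E \<longleftrightarrow> t = 0 \<and> \<omega> \<in> E0" using \<omega> t by (auto simp: rect_def D_iff)
    show "(t, \<omega>) \<in> rect {0} E \<longleftrightarrow> (if ereal t < \<tau> \<omega> then (t, \<omega>) \<in> rect {0} E'
        else (\<tau> \<omega>, t, \<omega>) \<in> (UNIV \<inter> {0..}) \<times> rect {0} E'')"
    proof (cases "ereal t < \<tau> \<omega>")
      case True
      have "(t, \<omega>) \<in> rect {0} E' \<longleftrightarrow> t = 0 \<and> \<omega> \<in> E'" using t \<omega>M by (auto simp: rect_def D_iff)
      moreover have "t = 0 \<Longrightarrow> \<omega> \<in> E0 \<longleftrightarrow> \<omega> \<in> E'" using E'(2)[OF \<omega>M] True by simp
      ultimately show ?thesis using True L by auto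
    next
      case False
      have "(\<tau> \<omega>, t, \<omega>) \<in> (UNIV \<inter> {0..}) \<times> rect {0} E'' \<longleftrightarrow> t = 0 \<and> \<omega> \<in> E''"
        using t \<omega>M \<open>0 \<le> \<tau> \<omega>\<close> by (auto simp: rect_def D_iff)
      moreover have "\<tau> \<omega> = 0" if "t = 0"
      proof -
        have "\<tau> \<omega> \<le> 0" using False that by (simp add: not_less zero_ereal_def)
        then show ?thesis using \<open>0 \<le> \<tau> \<omega>\<close> by (rule antisym)
      qed
      ultimately show ?thesis using False L E''[OF \<omega>M] by auto
    qed
  qed
  have "rect {0} E' \<in> Opt" by (rule rect_0_optional[OF E'(1)])
  moreover have "rect {0} E \<subseteq> D" by (auto simp: rect_def)
  ultimately show ?thesis using SplittableI[OF _ _ A'' null splits] by blast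
qed

section \<open>The predictable sigma-algebra of \<open>G\<close> consists of splittable sets\<close>

definition SplitM :: "(real \<times> 'a) measure" where
  "SplitM = measure_of D Splittable (\<lambda>_. 0)"

lemma sets_SplitM: "sets SplitM = Splittable"
  unfolding SplitM_def by (rule sigma_algebra.sets_measure_of_eq[OF Splittable_sigma_algebra])

lemma space_SplitM: "space SplitM = D"
  unfolding SplitM_def by (rule space_measure_of_conv)

text \<open>Sampling a \<open>G\<close>-adapted process at the dyadic points below \<open>t\<close> gives a process whose
  level sets are countable unions of splittable rectangles.\<close>

lemma dyadic_sampling_measurable:
  assumes adapted: "adapted M (G_filt M F \<tau>) X"
  shows "(\<lambda>p. X (dyadic_below n (fst p)) (snd p)) \<in> borel_measurable SplitM"
proof (rule measurableI)
  interpret S: sigma_algebra D Splittable by (rule Splittable_sigma_algebra)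
  fix A :: "real set" assume A: "A \<in> sets borel"
  define level where "level s = {\<omega>\<in>space M. X s \<omega> \<in> A}" for s
  have level_G: "level s \<in> G_filt M F \<tau> s" if "0 \<le> s" for s
    using adapted that A unfolding adapted_def level_def by blast
  have "(\<lambda>p. X (dyadic_below n (fst p)) (snd p)) -` A \<inter> space SplitM =
      rect {0} (level 0) \<union> (\<Union>k. rect {real k / 2^n<..(real k + 1) / 2^n} (level (real k / 2^n)))"
  proof (rule set_eqI)
    fix p :: "real \<times> 'a"
    obtain t \<omega> where p: "p = (t, \<omega>)" by fastforce
    consider "p \<notin> D" | "p \<in> D" "t = 0" | "p \<in> D" "0 < t" using p by (force simp: D_iff)
    then show "p \<in> (\<lambda>p. X (dyadic_below n (fst p)) (snd p)) -` A \<inter> space SplitM \<longleftrightarrow>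
      p \<in> rect {0} (level 0) \<union> (\<Union>k. rect {real k / 2^n<..(real k + 1) / 2^n} (level (real k / 2^n)))"
    proof cases
      case 1
      then show ?thesis unfolding space_SplitM rect_def by auto
    next
      case 2
      have "\<not> real k / 2^n < 0" for k :: nat by (simp add: not_less)
      then show ?thesis using 2 unfolding p space_SplitM rect_def level_def dyadic_below_def
        by (auto simp: D_iff)
    next
      case 3
      obtain k where k: "dyadic_below n t = real k / 2^n" using dyadic_below_grid[OF 3(2)] by blast
      have "(\<exists>k'. t \<in> {real k' / 2^n<..(real k' + 1) / 2^n} \<and> X (real k' / 2^n) \<omega> \<in> A) \<longleftrightarrow>
          X (dyadic_below n t) \<omega> \<in> A"
      proof
        assume "\<exists>k'. t \<in> {real k' / 2^n<..(real k' + 1) / 2^n} \<and> X (real k' / 2^n) \<omega> \<in> A"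
        then obtain k' where "t \<in> {real k' / 2^n<..(real k' + 1) / 2^n}" "X (real k' / 2^n) \<omega> \<in> A"
          by blast
        then show "X (dyadic_below n t) \<omega> \<in> A" using dyadic_below_eq_iff[OF 3(2), of n k'] by auto
      next
        assume "X (dyadic_below n t) \<omega> \<in> A"
        then show "\<exists>k'. t \<in> {real k' / 2^n<..(real k' + 1) / 2^n} \<and> X (real k' / 2^n) \<omega> \<in> A"
          using k dyadic_below_eq_iff[OF 3(2), of n k] by (intro exI[of _ k]) auto
      qed
      moreover have "p \<in> (\<Union>k. rect {real k / 2^n<..(real k + 1) / 2^n} (level (real k / 2^n))) \<longleftrightarrow>
          (\<exists>k'. t \<in> {real k' / 2^n<..(real k' + 1) / 2^n} \<and> X (real k' / 2^n) \<omega> \<in> A)"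
        using 3(1) unfolding p rect_def level_def by (auto simp: D_iff)
      moreover have "p \<notin> rect {0} (level 0)" using 3(2) unfolding p rect_def by simp
      moreover have "p \<in> (\<lambda>p. X (dyadic_below n (fst p)) (snd p)) -` A \<inter> space SplitM \<longleftrightarrow>
          X (dyadic_below n t) \<omega> \<in> A"
        using 3(1) unfolding p space_SplitM by simp
      ultimately show ?thesis by blast
    qed
  qed
  moreover have "rect {0} (level 0) \<in> Splittable" by (rule rect_0_splittable[OF level_G]) simp
  moreover have "rect {real k / 2^n<..(real k + 1) / 2^n} (level (real k / 2^n)) \<in> Splittable" for k
    by (rule rect_oc_splittable) (auto intro: level_G)
  then have "(\<Union>k. rect {real k / 2^n<..(real k + 1) / 2^n} (level (real k / 2^n))) \<in> Splittable"
    by (intro S.countable_nat_UN) auto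
  ultimately show "(\<lambda>p. X (dyadic_below n (fst p)) (snd p)) -` A \<inter> space SplitM \<in> sets SplitM"
    unfolding sets_SplitM by (simp only: S.Un)
qed simp

text \<open>A left-continuous \<open>G\<close>-adapted process is the pointwise limit of its dyadic samplings.\<close>

lemma left_continuous_measurable:
  assumes adapted: "adapted M (G_filt M F \<tau>) X" and lc: "left_cont_paths M X"
  shows "(\<lambda>p. X (fst p) (snd p)) \<in> borel_measurable SplitM"
proof (rule borel_measurable_LIMSEQ_real)
  show "(\<lambda>p. X (dyadic_below n (fst p)) (snd p)) \<in> borel_measurable SplitM" for n
    by (rule dyadic_sampling_measurable[OF adapted])
  fix p assume "p \<in> space SplitM"
  then obtain t \<omega> where p: "p = (t, \<omega>)" "0 \<le> t" "\<omega> \<in> space M"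
    unfolding space_SplitM by (cases p) (auto simp: D_iff)
  show "(\<lambda>n. X (dyadic_below n (fst p)) (snd p)) \<longlonglongrightarrow> X (fst p) (snd p)"
  proof (cases "t = 0")
    case False
    then have t: "0 < t" using p by simp
    have "((\<lambda>s. X s \<omega>) \<longlongrightarrow> X t \<omega>) (at_left t)"
      using lc p t unfolding left_cont_paths_def continuous_within by blast
    from filterlim_compose[OF this dyadic_below_tendsto[OF t]] show ?thesis unfolding p by simp
  next
    case True
    then have "dyadic_below n (fst p) = fst p" for n unfolding p dyadic_below_def by simp
    then show ?thesis by simp
  qed
qed

lemma predictable_subset_Splittable: "predictable_sigma M (G_filt M F \<tau>) \<subseteq> Splittable"
  unfolding predictable_sigma_def proc_sigma_def
proof (rule sigma_algebra.sigma_sets_subset[OF Splittable_sigma_algebra], safe)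
  fix X and B :: "real set"
  assume "adapted M (G_filt M F \<tau>) X" "left_cont_paths M X" "B \<in> sets borel"
  from measurable_sets[OF left_continuous_measurable[OF this(1,2)] this(3)]
  show "{p\<in>D. X (fst p) (snd p) \<in> B} \<in> Splittable"
    unfolding sets_SplitM space_SplitM by (simp add: Int_def conj_commute)
qed

definition OptM :: "(real \<times> 'a) measure" where
  "OptM = measure_of D Opt (\<lambda>_. 0)"

definition ParOptM :: "(ereal \<times> real \<times> 'a) measure" where
  "ParOptM = measure_of ({0..} \<times> D) ParOpt (\<lambda>_. 0)"

lemma sets_OptM: "sets OptM = Opt"
  unfolding OptM_def by (rule sigma_algebra.sets_measure_of_eq[OF Opt_sigma_algebra])

lemma space_OptM: "space OptM = D"
  unfolding OptM_def by (rule space_measure_of_conv)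

lemma sets_ParOptM: "sets ParOptM = ParOpt"
  unfolding ParOptM_def by (rule sigma_algebra.sets_measure_of_eq[OF ParOpt_sigma_algebra])

lemma space_ParOptM: "space ParOptM = {0..} \<times> D"
  unfolding ParOptM_def by (rule space_measure_of_conv)

definition fun_splits :: "(real \<times> 'a \<Rightarrow> real) \<Rightarrow> (real \<times> 'a \<Rightarrow> real) \<Rightarrow>
    (ereal \<times> real \<times> 'a \<Rightarrow> real) \<Rightarrow> 'a set \<Rightarrow> bool" where
  "fun_splits f f' f'' Z \<longleftrightarrow> (\<forall>\<omega>\<in>space M - Z. \<forall>t\<ge>0.
     f (t, \<omega>) = (if ereal t < \<tau> \<omega> then f' (t, \<omega>) else f'' (\<tau> \<omega>, t, \<omega>)))"

definition splittable_fun :: "(real \<times> 'a \<Rightarrow> real) \<Rightarrow> bool" where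
  "splittable_fun f \<longleftrightarrow> (\<exists>f' f'' Z. f' \<in> borel_measurable OptM \<and> f'' \<in> borel_measurable ParOptM \<and>
     negligible Z \<and> fun_splits f f' f'' Z)"

text \<open>A simple function is a finite combination of indicators of splittable sets; split
  each indicator and recombine.\<close>

lemma simple_function_splittable:
  assumes s: "simple_function SplitM s"
  shows "splittable_fun s"
proof -
  define R where "R = s ` D"
  have R: "finite R" using s unfolding simple_function_def R_def space_SplitM by auto
  define L where "L x = s -` {x} \<inter> D" for x
  have "\<forall>x. \<exists>A' A'' Z. x \<in> R \<longrightarrow> A' \<in> Opt \<and> A'' \<in> ParOpt \<and> negligible Z \<and> splits (L x) A' A'' Z"
  proof
    fix x show "\<exists>A' A'' Z. x \<in> R \<longrightarrow> A' \<in> Opt \<and> A'' \<in> ParOpt \<and> negligible Z \<and> splits (L x) A' A'' Z"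
    proof (cases "x \<in> R")
      case True
      then have "L x \<in> Splittable"
        using s unfolding simple_function_def R_def L_def space_SplitM sets_SplitM by auto
      then show ?thesis unfolding Splittable_def by blast
    qed blast
  qed
  then obtain A' A'' Z where AZ: "\<And>x. x \<in> R \<Longrightarrow>
      A' x \<in> Opt \<and> A'' x \<in> ParOpt \<and> negligible (Z x) \<and> splits (L x) (A' x) (A'' x) (Z x)"
    by metis
  define s' where "s' p = (\<Sum>x\<in>R. x * indicator (A' x) p)" for p
  define s'' where "s'' q = (\<Sum>x\<in>R. x * indicator (A'' x) q)" for q
  have "s' \<in> borel_measurable OptM" unfolding s'_def using AZ
    by (intro borel_measurable_sum borel_measurable_times borel_measurable_const
        borel_measurable_indicator) (auto simp: sets_OptM)
  moreover have "s'' \<in> borel_measurable ParOptM" unfolding s''_def using AZ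
    by (intro borel_measurable_sum borel_measurable_times borel_measurable_const
        borel_measurable_indicator) (auto simp: sets_ParOptM)
  moreover have "negligible (\<Union>x\<in>R. Z x)" using AZ R by (intro negligible_finite_UN) auto
  moreover have "fun_splits s s' s'' (\<Union>x\<in>R. Z x)" unfolding fun_splits_def
  proof (intro ballI allI impI)
    fix \<omega> and t :: real assume \<omega>: "\<omega> \<in> space M - (\<Union>x\<in>R. Z x)" and t: "0 \<le> t"
    have "(t, \<omega>) \<in> D" using \<omega> t by (auto simp: D_iff)
    then have sR: "s (t, \<omega>) \<in> R" unfolding R_def by auto
    have level: "(t, \<omega>) \<in> L x \<longleftrightarrow>
        (if ereal t < \<tau> \<omega> then (t, \<omega>) \<in> A' x else (\<tau> \<omega>, t, \<omega>) \<in> A'' x)" if "x \<in> R" for x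
      using AZ[OF that] \<omega> t that unfolding splits_def by blast
    have "indicator (L x) (t, \<omega>) = (indicator {p. s p = x} (t, \<omega>) :: real)" for x
      using \<open>(t, \<omega>) \<in> D\<close> unfolding L_def by (auto simp: indicator_def)
    then have sum_L: "(\<Sum>x\<in>R. x * indicator (L x) (t, \<omega>)) = s (t, \<omega>)"
      using sum_level_sets[of R s "(t, \<omega>)", OF R sR] by simp
    show "s (t, \<omega>) = (if ereal t < \<tau> \<omega> then s' (t, \<omega>) else s'' (\<tau> \<omega>, t, \<omega>))"
    proof (cases "ereal t < \<tau> \<omega>")
      case True
      have "s' (t, \<omega>) = (\<Sum>x\<in>R. x * indicator (L x) (t, \<omega>))" unfolding s'_def
        by (rule sum.cong) (use level True in \<open>auto simp: indicator_def\<close>)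
      then show ?thesis using True sum_L by simp
    next
      case False
      have "s'' (\<tau> \<omega>, t, \<omega>) = (\<Sum>x\<in>R. x * indicator (L x) (t, \<omega>))" unfolding s''_def
        by (rule sum.cong) (use level False in \<open>auto simp: indicator_def\<close>)
      then show ?thesis using False sum_L by simp
    qed
  qed
  ultimately show ?thesis unfolding splittable_fun_def by blast
qed

text \<open>Splittable functions are closed under pointwise limits on \<open>D\<close>: split the limit
  into the limits of the two parts.\<close>

lemma limit_splittable:
  assumes S: "\<And>i. splittable_fun (S i)" and lim: "\<And>p. p \<in> D \<Longrightarrow> (\<lambda>i. S i p) \<longlonglongrightarrow> f p"
  shows "splittable_fun f"
proof -
  have "\<forall>i. \<exists>s' s'' Z. s' \<in> borel_measurable OptM \<and> s'' \<in> borel_measurable ParOptM \<and>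
      negligible Z \<and> fun_splits (S i) s' s'' Z"
    using S unfolding splittable_fun_def by blast
  then obtain s' s'' Z where SZ: "\<And>i. s' i \<in> borel_measurable OptM"
    "\<And>i. s'' i \<in> borel_measurable ParOptM" "\<And>i. negligible (Z i)"
    "\<And>i. fun_splits (S i) (s' i) (s'' i) (Z i)"
    by metis
  have "(\<lambda>p. lim (\<lambda>i. s' i p)) \<in> borel_measurable OptM"
    using SZ(1) by (rule borel_measurable_lim_metric)
  moreover have "(\<lambda>q. lim (\<lambda>i. s'' i q)) \<in> borel_measurable ParOptM"
    using SZ(2) by (rule borel_measurable_lim_metric)
  moreover have "negligible (\<Union>i. Z i)" using SZ(3) by (rule negligible_countable_UN)
  moreover have "fun_splits f (\<lambda>p. lim (\<lambda>i. s' i p)) (\<lambda>q. lim (\<lambda>i. s'' i q)) (\<Union>i. Z i)"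
    unfolding fun_splits_def
  proof (intro ballI allI impI)
    fix \<omega> and t :: real assume \<omega>: "\<omega> \<in> space M - (\<Union>i. Z i)" and t: "0 \<le> t"
    have S_lim: "(\<lambda>i. S i (t, \<omega>)) \<longlonglongrightarrow> f (t, \<omega>)" using lim \<omega> t by (auto simp: D_iff)
    have "S i (t, \<omega>) = (if ereal t < \<tau> \<omega> then s' i (t, \<omega>) else s'' i (\<tau> \<omega>, t, \<omega>))" for i
      using SZ(4)[of i] \<omega> t unfolding fun_splits_def by blast
    with S_lim show "f (t, \<omega>) =
        (if ereal t < \<tau> \<omega> then lim (\<lambda>i. s' i (t, \<omega>)) else lim (\<lambda>i. s'' i (\<tau> \<omega>, t, \<omega>)))"
      by (cases "ereal t < \<tau> \<omega>") (simp_all add: limI)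
  qed
  ultimately show ?thesis unfolding splittable_fun_def by blast
qed

text \<open>Every \<open>G\<close>-predictable process is splittable: it is \<open>Splittable\<close>-measurable, hence a
  pointwise limit of simple functions.\<close>

lemma predictable_splittable:
  assumes Y: "proc_measurable M (predictable_sigma M (G_filt M F \<tau>)) Y"
  shows "splittable_fun (\<lambda>p. Y (fst p) (snd p))"
proof -
  have "(\<lambda>p. Y (fst p) (snd p)) \<in> borel_measurable SplitM"
  proof (rule measurableI)
    fix B :: "real set" assume "B \<in> sets borel"
    then have "{p\<in>D. Y (fst p) (snd p) \<in> B} \<in> Splittable"
      using Y predictable_subset_Splittable unfolding proc_measurable_def by blast
    then show "(\<lambda>p. Y (fst p) (snd p)) -` B \<inter> space SplitM \<in> sets SplitM"
      unfolding sets_SplitM space_SplitM by (simp add: Int_def conj_commute)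
  qed simp
  from borel_measurable_implies_sequence_metric[OF this, of 0] obtain S where
    "\<And>i. simple_function SplitM (S i)"
    "\<And>p. p \<in> space SplitM \<Longrightarrow> (\<lambda>i. S i p) \<longlonglongrightarrow> Y (fst p) (snd p)"
    by blast
  then show ?thesis
    unfolding space_SplitM by (blast intro: limit_splittable simple_function_splittable)
qed

lemma OptM_proc_measurable:
  "f \<in> borel_measurable OptM \<Longrightarrow> proc_measurable M Opt (\<lambda>t \<omega>. f (t, \<omega>))"
  unfolding proc_measurable_def using measurable_sets[of f OptM borel]
  by (simp add: sets_OptM space_OptM vimage_def Int_def conj_commute)

lemma ParOptM_param_measurable:
  "f \<in> borel_measurable ParOptM \<Longrightarrow> param_measurable M F (\<lambda>u t \<omega>. f (u, t, \<omega>))"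
  unfolding param_measurable_def using measurable_sets[of f ParOptM borel]
  by (simp add: sets_ParOptM space_ParOptM vimage_def Int_def conj_commute)

end

theorem mainTheorem3:
  fixes M :: "'a measure" and F :: "real \<Rightarrow> 'a set set" and \<tau> :: "'a \<Rightarrow> ereal"
    and Y :: "real \<Rightarrow> 'a \<Rightarrow> real"
  assumes "prob_space M"
    and "filtration M F"
    and "right_continuous_filtration F"
    and "null_sigma M (filt_infty M F) \<subseteq> F 0"
    and "\<tau> \<in> borel_measurable M"
    and "\<forall>\<omega>\<in>space M. 0 \<le> \<tau> \<omega>"
    and "proc_measurable M (predictable_sigma M (G_filt M F \<tau>)) Y"
  shows "\<exists>Y' Y''. proc_measurable M (optional_sigma M F) Y' \<and> param_measurable M F Y'' \<and>
     (\<exists>Z. Z \<in> N_tau M F \<tau> \<and> (\<exists>B\<in>sets M. measure M B = 0 \<and> Z \<subseteq> B) \<and>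
        (\<forall>\<omega>\<in>space M - Z. \<forall>t\<ge>0.
           Y t \<omega> = (if ereal t < \<tau> \<omega> then Y' t \<omega> else Y'' (\<tau> \<omega>) t \<omega>)))"
proof -
  interpret enlargement M F \<tau>
    using assms(1,2,3,6) by (rule enlargement.intro)
  obtain f' f'' Z where f': "f' \<in> borel_measurable OptM" and f'': "f'' \<in> borel_measurable ParOptM"
    and Z: "negligible Z" and split: "fun_splits (\<lambda>p. Y (fst p) (snd p)) f' f'' Z"
    using predictable_splittable[OF assms(7)] unfolding splittable_fun_def by blast
  show ?thesis
  proof (intro exI conjI)
    show "proc_measurable M (optional_sigma M F) (\<lambda>t \<omega>. f' (t, \<omega>))"
      by (rule OptM_proc_measurable[OF f'])
    show "param_measurable M F (\<lambda>u t \<omega>. f'' (u, t, \<omega>))"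
      by (rule ParOptM_param_measurable[OF f''])
    show "Z \<in> N_tau M F \<tau>" "\<exists>B\<in>sets M. measure M B = 0 \<and> Z \<subseteq> B"
      using negligible_in_N[OF Z] by auto
    show "\<forall>\<omega>\<in>space M - Z. \<forall>t\<ge>0. Y t \<omega> =
        (if ereal t < \<tau> \<omega> then f' (t, \<omega>) else f'' (\<tau> \<omega>, t, \<omega>))"
      using split unfolding fun_splits_def by simp
  qed
qed

end
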